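(* Let $r$ be a positive integer and $g\in\{0,1\}$. Put $$A_{r,g}(z)=\sum_{m=0}^{r}\binom{r-g+\frac14}{m}\binom{2r-g-m}{r-g}(-z)^m,\qquad B_{r,g}(z)=\sum_{m=0}^{r-g}\binom{r-\frac14}{m}\binom{2r-g-m}{r}(-z)^m.$$ (i) There is a power series $F_{r,g}(z)$ such that for all complex $z$ with $|z|<1$, $$A_{r,g}(z)-(1-z)^{1/4}B_{r,g}(z)=z^{2r+1-g}F_{r,g}(z)$$ and $$|F_{r,g}(z)|\le \frac{\binom{r-g+1/4}{r+1-g}\binom{r-1/4}{r}}{\binom{2r+1-g}{r}}\,(1-|z|)^{-\frac12(2r+1-g)}.$$ (ii) For all complex $z$ with $|1-z|\le1$, $|A_{r,g}(z)|\le\binom{2r-g}{r}$. (iii) For all complex $z\neq0$ and $h\in\{0,1\}$, $A_{r,0}(z)B_{r+h,1}(z)\neq A_{r+h,1}(z)B_{r,0}(z)$.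
   Context: For real $a$ and a nonnegative integer $m$, $\binom{a}{m}=a(a-1)\cdots(a-m+1)/m!$. In (i), $(1-z)^{1/4}$ denotes the principal branch on $|z|<1$ (equal to $1$ at $z=0$). *)

theory Defs
  imports "HOL-Analysis.Analysis"
begin

definition polyA :: "nat \<Rightarrow> nat \<Rightarrow> complex \<Rightarrow> complex" where
  "polyA r g z = (\<Sum>m = 0..r. complex_of_real ((real r - real g + 1/4) gchoose m)
       * of_nat ((2*r - g - m) choose (r - g)) * (- z) ^ m)"

definition polyB :: "nat \<Rightarrow> nat \<Rightarrow> complex \<Rightarrow> complex" where
  "polyB r g z = (\<Sum>m = 0..r - g. complex_of_real ((real r - 1/4) gchoose m)
       * of_nat ((2*r - g - m) choose r) * (- z) ^ m)"

end

theory Submission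
  imports Defs
begin

text \<open>
  Up to constants, A(r,g) and B(r,g) are the terminating hypergeometric polynomials
  F(-r, -(r-g+1/4); -(2r-g); z) and F(-(r-g), -(r-1/4); -(2r-g); z). By Euler's transformation,
  (1-z)^(1/4) B solves the same hypergeometric equation as A, so the coefficients of the remainder
  E = A - (1-z)^(1/4) B obey the two-term recurrence of A. Since E_0 = 0, this forces E_n = 0 for
  n < e = 2r+1-g; beyond e the recurrence is dominated by that of (1-x)^(-e/2), which gives the
  bound in (i).

  The value of E_e comes from the cross product A(r,g) B(r',g') - A(r',g') B(r,g) with the
  neighbouring index (r',g'): the (1-z)^(1/4) parts cancel, so it vanishes to order e, and it has
  degree at most e. Hence it is the monomial E_e binomial(e,r) z^e, which also proves (iii).
  For (ii), A(1-w) again solves a hypergeometric equation whose coefficient recurrence has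
  nonnegative ratios, so all its coefficients have one sign and |A(z)| <= |A(0)| for |1-z| <= 1.
\<close>

lemma gbinomial_Suc_rec:
  "(of_nat k + 1) * (a gchoose Suc k) = (a - of_nat k) * (a gchoose k :: 'a::field_char_0)"
  using gbinomial_mult_1[of a k] by (simp add: algebra_simps)

lemma gbinomial_pos:
  fixes a :: real
  assumes "real k < a + 1"
  shows "0 < a gchoose k"
proof -
  have "0 < (\<Prod>i = 0..<k. a - of_nat i)"
    using assms by (intro prod_pos) auto
  then show ?thesis
    by (metis gbinomial_mult_fact' fact_gt_zero zero_less_mult_pos2)
qed

lemma of_real_gbinomial: "of_real (a gchoose n) = (of_real a gchoose n :: 'a::real_field)"
proof -
  have "fact n * of_real (a gchoose n) = (of_real (fact n * (a gchoose n)) :: 'a)"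
    by simp
  also have "\<dots> = fact n * (of_real a gchoose n)"
    unfolding gbinomial_mult_fact by simp
  finally show ?thesis by simp
qed

lemma recurrence_zero:
  fixes x :: "nat \<Rightarrow> 'a::field"
  assumes "\<And>n. n < m \<Longrightarrow> Q n * x (Suc n) = P n * x n" "\<And>n. n < m \<Longrightarrow> Q n \<noteq> 0"
    and "x 0 = 0" "n \<le> m"
  shows "x n = 0"
  using assms(4)
proof (induction n)
  case (Suc n)
  then show ?case using assms(1,2)[of n] by simp
qed (use assms in simp)

lemma recurrence_nonneg:
  fixes x :: "nat \<Rightarrow> real"
  assumes "\<And>n. Q n * x (Suc n) = P n * x n" "\<And>n. 0 < Q n" "\<And>n. 0 \<le> P n" "0 \<le> x 0"
  shows "0 \<le> x n"
proof (induction n)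
  case (Suc n)
  have "0 \<le> Q n * x (Suc n)" using assms(1,3) Suc by simp
  then show ?case using assms(2)[of n] by (simp add: zero_le_mult_iff)
qed (use assms in simp)

lemma recurrence_le:
  fixes x y :: "nat \<Rightarrow> real"
  assumes x: "\<And>n. Q n * x (Suc n) = P n * x n" and y: "\<And>n. Q n * y (Suc n) = R n * y n"
    and Q: "\<And>n. 0 < Q n" and P: "\<And>n. 0 \<le> P n" and PR: "\<And>n. P n \<le> R n"
    and x0: "0 \<le> x 0" "x 0 \<le> y 0"
  shows "x n \<le> y n"
proof (induction n)
  case (Suc n)
  have "0 \<le> x n" by (rule recurrence_nonneg[OF x Q P x0(1)])
  then have "P n * x n \<le> R n * y n"
    using Suc P[of n] PR[of n] by (intro mult_mono) auto
  then have "Q n * x (Suc n) \<le> Q n * y (Suc n)" by (simp only: x y)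
  then show ?case using Q[of n] by simp
qed (use x0 in simp)

section \<open>The hypergeometric differential operator\<close>

definition hypgeom_op :: "'a::comm_ring_1 \<Rightarrow> 'a \<Rightarrow> 'a \<Rightarrow> 'a fps \<Rightarrow> 'a fps" where
  "hypgeom_op a b c f = fps_X * (1 - fps_X) * fps_deriv (fps_deriv f)
     + (fps_const c - fps_const (a + b + 1) * fps_X) * fps_deriv f - fps_const (a * b) * f"

lemma fps_nth_hypgeom_op:
  "fps_nth (hypgeom_op a b c f) n
     = (of_nat n + 1) * (of_nat n + c) * fps_nth f (Suc n)
       - (of_nat n + a) * (of_nat n + b) * fps_nth f n"
proof -
  have X2: "fps_nth (fps_X * (fps_X * g)) n = (if n < 2 then 0 else fps_nth g (n - 2))"
    for g :: "'a fps"
    using fps_X_power_mult_nth[of 2 g n] by (simp add: power2_eq_square mult.assoc)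
  show ?thesis
    by (cases n; cases "n - 1")
       (simp_all add: hypgeom_op_def algebra_simps X2 fps_const_mult_left)
qed

lemma hypgeom_op_eq_0_iff:
  "hypgeom_op a b c f = 0 \<longleftrightarrow>
     (\<forall>n. (of_nat n + 1) * (of_nat n + c) * fps_nth f (Suc n)
        = (of_nat n + a) * (of_nat n + b) * fps_nth f n)"
  by (auto simp: fps_eq_iff fps_nth_hypgeom_op)

lemma hypgeom_op_diff: "hypgeom_op a b c (f - g) = hypgeom_op a b c f - hypgeom_op a b c g"
  by (simp add: hypgeom_op_def algebra_simps)

text \<open>Euler's transformation F(a,b;c;z) = (1-z)^(c-a-b) F(c-a,c-b;c;z), with the factor
  (1-z)^(c-a-b) characterised by its differential equation.\<close>

lemma hypgeom_op_Euler:
  fixes S B :: "'a::idom fps"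
  assumes S: "(1 - fps_X) * fps_deriv S = fps_const (a + b - c) * S"
    and B: "hypgeom_op (c - a) (c - b) c B = 0"
  shows "hypgeom_op a b c (S * B) = 0"
proof -
  have S2: "(1 - fps_X) * fps_deriv (fps_deriv S) = fps_const (a + b - c + 1) * fps_deriv S"
  proof -
    have e: "fps_const (a + b - c + 1) = fps_const (a + b - c) + (1 :: 'a fps)" by simp
    show ?thesis unfolding e using arg_cong[OF S, of fps_deriv] by (simp add: algebra_simps)
  qed
  have "(1 - fps_X) * hypgeom_op a b c (S * B) = S * ((1 - fps_X) * hypgeom_op (c - a) (c - b) c B)"
    using S S2 unfolding hypgeom_op_def
    by (simp only: fps_deriv_mult fps_deriv_add fps_const_add[symmetric] fps_const_sub[symmetric]
        fps_const_mult[symmetric] fps_const_1_eq_1) algebra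
  moreover have "(1 - fps_X :: 'a fps) \<noteq> 0"
    by (metis fps_sub_nth fps_one_nth fps_X_nth fps_zero_nth zero_neq_one diff_zero)
  ultimately show ?thesis using B by simp
qed

definition hypgeom_op_poly :: "'a::idom \<Rightarrow> 'a \<Rightarrow> 'a \<Rightarrow> 'a poly \<Rightarrow> 'a poly" where
  "hypgeom_op_poly a b c p = [:0, 1:] * (1 - [:0, 1:]) * pderiv (pderiv p)
     + ([:c:] - [:a + b + 1:] * [:0, 1:]) * pderiv p - [:a * b:] * p"

lemma fps_of_poly_hypgeom_op_poly:
  "fps_of_poly (hypgeom_op_poly a b c p) = hypgeom_op a b c (fps_of_poly p)"
  by (simp only: hypgeom_op_poly_def hypgeom_op_def fps_of_poly_add fps_of_poly_diff fps_of_poly_mult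
      fps_of_poly_pderiv fps_of_poly_const fps_of_poly_fps_X fps_of_poly_1)

lemma hypgeom_op_poly_reflect:
  "hypgeom_op_poly a b (a + b + 1 - c) (p \<circ>\<^sub>p [:1, -1:]) = hypgeom_op_poly a b c p \<circ>\<^sub>p [:1, -1:]"
proof -
  let ?L = "[:1, -1:] :: 'a poly"
  have L: "?L = 1 - [:0, 1:]" by (simp add: one_pCons)
  have XL: "[:0, 1:] \<circ>\<^sub>p ?L = ?L" by (simp add: pcompose_pCons)
  have dL: "pderiv ?L = - 1" by (simp add: pderiv_pCons one_pCons)
  have const_split: "[:a + b + 1 - c:] = [:a:] + [:b:] + 1 - [:c:]" "[:a + b + 1:] = [:a:] + [:b:] + 1"
    "[:a * b:] = [:a:] * [:b:]"
    by (simp_all add: one_pCons)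
  show ?thesis
    unfolding hypgeom_op_poly_def pderiv_pcompose pcompose_add pcompose_diff pcompose_mult pcompose_const
      pcompose_1 XL dL pderiv_minus pderiv_mult pderiv_1
    unfolding const_split L by algebra
qed

definition fps_one_minus_X_powr :: "'a::field_char_0 \<Rightarrow> 'a fps" where
  "fps_one_minus_X_powr c = Abs_fps (\<lambda>n. (- 1) ^ n * (c gchoose n))"

lemma fps_one_minus_X_powr_ODE:
  "(1 - fps_X) * fps_deriv (fps_one_minus_X_powr c) = fps_const (- c) * fps_one_minus_X_powr c"
proof -
  define s where "s n = (- 1) ^ n * (c gchoose n)" for n
  have s: "fps_one_minus_X_powr c = Abs_fps s" by (simp add: fps_eq_iff s_def fps_one_minus_X_powr_def)
  have deriv: "(of_nat n + 1) * s (Suc n) = - ((c - of_nat n) * s n)" for n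
  proof -
    have "(of_nat n + 1) * s (Suc n) = - ((- 1) ^ n * ((of_nat n + 1) * (c gchoose Suc n)))"
      by (simp add: s_def)
    also have "\<dots> = - ((c - of_nat n) * s n)"
      by (simp only: gbinomial_Suc_rec s_def mult.left_commute)
    finally show ?thesis .
  qed
  have "fps_nth ((1 - fps_X) * fps_deriv (Abs_fps s)) n = - c * s n" for n
  proof (cases n)
    case 0
    then show ?thesis using deriv[of 0] by simp
  next
    case (Suc m)
    then have "fps_nth ((1 - fps_X) * fps_deriv (Abs_fps s)) n
        = (of_nat m + 2) * s (Suc (Suc m)) - (of_nat m + 1) * s (Suc m)"
      by (simp add: left_diff_distrib add.commute)
    also have "\<dots> = - c * s n"
      using deriv[of n] deriv[of m] Suc by (simp add: algebra_simps)
    finally show ?thesis .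
  qed
  then show ?thesis unfolding s by (simp add: fps_eq_iff)
qed

lemma fps_conv_radius_one_minus_X_powr:
  "1 \<le> fps_conv_radius (fps_one_minus_X_powr (c :: complex))"
proof -
  have "fps_conv_radius (fps_one_minus_X_powr c) = fps_conv_radius (fps_binomial c)"
    unfolding fps_conv_radius_def fps_one_minus_X_powr_def
    by (intro conv_radius_cong) (simp add: norm_mult norm_power)
  then show ?thesis by (simp add: fps_conv_radius_binomial)
qed

lemma eval_fps_one_minus_X_powr:
  fixes z c :: complex
  assumes "norm z < 1"
  shows "eval_fps (fps_one_minus_X_powr c) z = (1 - z) powr c"
proof -
  have "norm (- z) < 1" using assms by simp
  from gen_binomial_complex[OF this, of c]
  have "(\<lambda>n. (c gchoose n) * (- z) ^ n) sums (1 + - z) powr c" .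
  moreover have "(c gchoose n) * (- z) ^ n = fps_nth (fps_one_minus_X_powr c) n * z ^ n" for n
    by (simp add: fps_one_minus_X_powr_def power_minus[of z])
  ultimately show ?thesis
    unfolding eval_fps_def by (simp add: sums_iff)
qed

definition fps_of_real :: "real fps \<Rightarrow> 'a::real_algebra_1 fps" where
  "fps_of_real f = Abs_fps (\<lambda>n. of_real (fps_nth f n))"

lemma fps_nth_fps_of_real [simp]: "fps_nth (fps_of_real f) n = of_real (fps_nth f n)"
  by (simp add: fps_of_real_def)

lemma fps_of_real_diff: "fps_of_real (f - g) = fps_of_real f - fps_of_real g"
  by (simp add: fps_eq_iff)

lemma fps_of_real_mult: "fps_of_real (f * g) = fps_of_real f * fps_of_real g"
  by (simp add: fps_eq_iff fps_mult_nth)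

lemma fps_of_real_fps_of_poly: "fps_of_real (fps_of_poly p) = fps_of_poly (map_poly of_real p)"
  by (simp add: fps_eq_iff coeff_map_poly)

lemma fps_of_real_one_minus_X_powr:
  "fps_of_real (fps_one_minus_X_powr c) = fps_one_minus_X_powr (of_real c :: 'a::real_field)"
  by (simp add: fps_eq_iff fps_one_minus_X_powr_def of_real_gbinomial)

lemma map_poly_of_real_mult:
  "map_poly of_real (p * q) = map_poly of_real p * (map_poly of_real q :: 'a::real_field poly)"
  by (rule poly_eqI) (simp add: coeff_mult coeff_map_poly)

lemma map_poly_of_real_add:
  "map_poly of_real (p + q) = map_poly of_real p + (map_poly of_real q :: 'a::real_field poly)"
  by (rule poly_eqI) (simp add: coeff_map_poly)

lemma map_poly_of_real_diff:
  "map_poly of_real (p - q) = map_poly of_real p - (map_poly of_real q :: 'a::real_field poly)"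
  by (rule poly_eqI) (simp add: coeff_map_poly)

lemma poly_map_poly_of_real:
  fixes z :: "'a::real_field"
  assumes "degree p \<le> n"
  shows "poly (map_poly of_real p) z = (\<Sum>i\<le>n. of_real (coeff p i) * z ^ i)"
proof -
  have "degree (map_poly of_real p :: 'a poly) = degree p" by (simp add: degree_map_poly)
  then have "poly (map_poly of_real p) z = (\<Sum>i\<le>degree p. of_real (coeff p i) * z ^ i)"
    by (simp add: poly_altdef coeff_map_poly)
  also have "\<dots> = (\<Sum>i\<le>n. of_real (coeff p i) * z ^ i)"
    by (rule sum.mono_neutral_left) (use assms in \<open>auto simp: coeff_eq_0\<close>)
  finally show ?thesis .
qed

lemma poly_map_poly_of_real_pcompose:
  "poly (map_poly of_real (p \<circ>\<^sub>p q)) (z :: 'a::real_field)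
    = poly (map_poly of_real p) (poly (map_poly of_real q) z)"
  by (induction p)
     (simp_all add: map_poly_pCons pcompose_pCons map_poly_of_real_add map_poly_of_real_mult)

lemma norm_poly_of_real_le:
  fixes p :: "real poly" and w :: "'a::real_normed_field"
  assumes "\<And>k. 0 \<le> coeff p k" "norm w \<le> 1"
  shows "norm (poly (map_poly of_real p) w) \<le> poly p 1"
proof -
  have "norm (poly (map_poly of_real p) w) \<le> (\<Sum>i\<le>degree p. norm (of_real (coeff p i) * w ^ i))"
    unfolding poly_map_poly_of_real[OF order.refl] by (rule norm_sum)
  also have "\<dots> \<le> (\<Sum>i\<le>degree p. coeff p i)"
    using assms by (intro sum_mono) (auto simp: norm_mult norm_power intro!: mult_left_le power_le_one)
  also have "\<dots> = poly p 1" by (simp add: poly_altdef)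
  finally show ?thesis .
qed

section \<open>The polynomials \<open>A\<close> and \<open>B\<close>\<close>

definition pade_poly :: "real \<Rightarrow> nat \<Rightarrow> nat \<Rightarrow> real poly" where
  "pade_poly x N K = (\<Sum>m\<le>N - K. monom ((x gchoose m) * real ((N - m) choose K) * (- 1) ^ m) m)"

lemma coeff_pade_poly:
  "coeff (pade_poly x N K) m
     = (if m \<le> N - K then (x gchoose m) * real ((N - m) choose K) * (- 1) ^ m else 0)"
  by (simp add: pade_poly_def coeff_sum coeff_monom)

lemma degree_pade_poly: "degree (pade_poly x N K) \<le> N - K"
  by (rule degree_le) (simp add: coeff_pade_poly)

lemma pade_poly_coeff_rec:
  fixes x :: real
  assumes "K \<le> N"
  defines "u \<equiv> coeff (pade_poly x N K)"
  shows "(real m + 1) * (real m - real N) * u (Suc m) = (real m - real (N - K)) * (real m - x) * u m"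
proof (cases "m < N - K")
  case True
  define d where "d = N - Suc m"
  have d: "N - m = Suc d" using True by (simp add: d_def)
  have "(N - m - K) * ((N - m) choose K) = (N - m) * ((N - Suc m) choose K)"
    using binomial_absorb_comp[of "Suc d" K] by (simp only: d d_def[symmetric] diff_Suc_1)
  then have choose:
    "real ((N - Suc m) choose K) * real (N - m) = real ((N - m) choose K) * real (N - m - K)"
    by (metis mult.commute of_nat_mult)
  have u: "u (Suc m) = (x gchoose Suc m) * real ((N - Suc m) choose K) * (- 1) ^ Suc m"
    "u m = (x gchoose m) * real ((N - m) choose K) * (- 1) ^ m"
    using True by (simp_all add: u_def coeff_pade_poly)
  have diffs: "real (N - m) = real N - real m" "real (N - m - K) = real N - real m - real K"
    "real (N - K) = real N - real K"
    using True by (simp_all add: of_nat_diff)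
  have "(real m + 1) * (real m - real N) * u (Suc m)
      = ((real m + 1) * (x gchoose Suc m)) * (real ((N - Suc m) choose K) * real (N - m)) * (- 1) ^ m"
    unfolding u diffs power_Suc by algebra
  also have "\<dots>
      = ((x - real m) * (x gchoose m)) * (real ((N - m) choose K) * real (N - m - K)) * (- 1) ^ m"
    by (simp only: choose gbinomial_Suc_rec)
  also have "\<dots> = (real m - real (N - K)) * (real m - x) * u m"
    unfolding u diffs by algebra
  finally show ?thesis .
qed (auto simp: u_def coeff_pade_poly)

lemma hypgeom_op_pade_poly:
  assumes "K \<le> N"
  shows "hypgeom_op_poly (- real (N - K)) (- x) (- real N) (pade_poly x N K) = 0"
proof -
  have "hypgeom_op (- real (N - K)) (- x) (- real N) (fps_of_poly (pade_poly x N K)) = 0"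
    unfolding hypgeom_op_eq_0_iff using pade_poly_coeff_rec[OF assms] by (simp add: algebra_simps)
  then show ?thesis
    by (metis fps_of_poly_0 fps_of_poly_eq_iff fps_of_poly_hypgeom_op_poly)
qed

definition padeA :: "nat \<Rightarrow> nat \<Rightarrow> real poly" where
  "padeA r g = pade_poly (real r - real g + 1/4) (2 * r - g) (r - g)"

definition padeB :: "nat \<Rightarrow> nat \<Rightarrow> real poly" where
  "padeB r g = pade_poly (real r - 1/4) (2 * r - g) r"

lemma of_real_pade_term:
  "complex_of_real x * of_nat n * (- z) ^ m = complex_of_real (x * real n * (- 1) ^ m) * z ^ m"
  by (simp add: power_minus[of z])

lemma polyA_eq: "g \<le> r \<Longrightarrow> polyA r g z = poly (map_poly of_real (padeA r g)) z"
  unfolding polyA_def padeA_def of_real_pade_term atLeast0AtMost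
  by (subst poly_map_poly_of_real[where n = r]) (auto intro!: sum.cong simp: coeff_pade_poly
      intro: order.trans[OF degree_pade_poly])

lemma polyB_eq: "polyB r g z = poly (map_poly of_real (padeB r g)) z"
  unfolding polyB_def padeB_def of_real_pade_term atLeast0AtMost
  by (subst poly_map_poly_of_real[where n = "r - g"]) (auto intro!: sum.cong simp: coeff_pade_poly
      intro: order.trans[OF degree_pade_poly])

lemma degree_padeA: "g \<le> r \<Longrightarrow> degree (padeA r g) \<le> r"
  unfolding padeA_def using degree_pade_poly[of _ "2 * r - g" "r - g"] by simp

lemma degree_padeB: "degree (padeB r g) \<le> r - g"
  unfolding padeB_def using degree_pade_poly[of _ "2 * r - g" r] by simp

lemma coeff_padeA_top:
  "g \<le> r \<Longrightarrow> coeff (padeA r g) r = ((real r - real g + 1/4) gchoose r) * (- 1) ^ r"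
  by (simp add: padeA_def coeff_pade_poly)

lemma coeff_padeB_top:
  "g \<le> r \<Longrightarrow> coeff (padeB r g) (r - g) = ((real r - 1/4) gchoose (r - g)) * (- 1) ^ (r - g)"
  by (simp add: padeB_def coeff_pade_poly)

lemma hypgeom_op_padeA:
  assumes "g \<le> r"
  shows "hypgeom_op_poly (- real r) (- (real r - real g + 1/4)) (- (2 * real r - real g))
    (padeA r g) = 0"
  using hypgeom_op_pade_poly[of "r - g" "2 * r - g" "real r - real g + 1/4"] assms
  by (simp add: padeA_def of_nat_diff)

lemma hypgeom_op_padeB:
  assumes "g \<le> r"
  shows "hypgeom_op_poly (- (real r - real g)) (- (real r - 1/4)) (- (2 * real r - real g))
    (padeB r g) = 0"
  using hypgeom_op_pade_poly[of r "2 * r - g" "real r - 1/4"] assms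
  by (simp add: padeB_def of_nat_diff)

section \<open>The remainder \<open>A - (1 - z) powr (1/4) * B\<close>\<close>

definition pade_error :: "nat \<Rightarrow> nat \<Rightarrow> real fps" where
  "pade_error r g = fps_of_poly (padeA r g) - fps_one_minus_X_powr (1/4) * fps_of_poly (padeB r g)"

lemma hypgeom_op_pade_error:
  assumes "g \<le> r"
  shows "hypgeom_op (- real r) (- (real r - real g + 1/4)) (- (2 * real r - real g))
    (pade_error r g) = 0"
proof -
  have "hypgeom_op (- real r) (- (real r - real g + 1/4)) (- (2 * real r - real g))
      (fps_one_minus_X_powr (1/4) * fps_of_poly (padeB r g)) = 0"
  proof (rule hypgeom_op_Euler)
    show "(1 - fps_X) * fps_deriv (fps_one_minus_X_powr (1/4))
        = fps_const (- real r + - (real r - real g + 1/4) - - (2 * real r - real g))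
          * fps_one_minus_X_powr (1/4)"
      using fps_one_minus_X_powr_ODE[of "1/4 :: real"] by simp
    show "hypgeom_op (- (2 * real r - real g) - - real r)
        (- (2 * real r - real g) - - (real r - real g + 1/4))
        (- (2 * real r - real g)) (fps_of_poly (padeB r g)) = 0"
      using hypgeom_op_padeB[OF assms] unfolding fps_of_poly_hypgeom_op_poly[symmetric]
      by (simp add: algebra_simps)
  qed
  then show ?thesis
    using hypgeom_op_padeA[OF assms]
    by (simp add: pade_error_def hypgeom_op_diff flip: fps_of_poly_hypgeom_op_poly)
qed

lemma pade_error_rec:
  assumes "g \<le> r"
  shows "(real n + 1) * (real n - (2 * real r - real g)) * fps_nth (pade_error r g) (Suc n)
       = (real n - real r) * (real n - (real r - real g + 1/4)) * fps_nth (pade_error r g) n"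
  using hypgeom_op_pade_error[OF assms] unfolding hypgeom_op_eq_0_iff add_uminus_conv_diff by blast

lemma pade_error_vanishing:
  assumes "g \<le> r" "n \<le> 2 * r - g"
  shows "fps_nth (pade_error r g) n = 0"
proof (rule recurrence_zero)
  show "(real k + 1) * (real k - (2 * real r - real g)) * fps_nth (pade_error r g) (Suc k)
      = (real k - real r) * (real k - (real r - real g + 1/4)) * fps_nth (pade_error r g) k" for k
    by (rule pade_error_rec[OF assms(1)])
  show "(real k + 1) * (real k - (2 * real r - real g)) \<noteq> 0" if "k < 2 * r - g" for k
    using that by simp
  have "(2 * r - g) choose (r - g) = (2 * r - g) choose r"
    using binomial_symmetric[of "r - g" "2 * r - g"] assms(1) by simp
  then show "fps_nth (pade_error r g) 0 = 0"
    by (simp add: pade_error_def padeA_def padeB_def coeff_pade_poly fps_one_minus_X_powr_def)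
qed (fact assms(2))

section \<open>The cross product of neighbouring approximations\<close>

lemma fps_X_power_mult_shift:
  assumes "\<And>i. i < m \<Longrightarrow> fps_nth f i = 0"
  shows "fps_X ^ m * fps_shift m f = f"
  by (rule fps_ext) (simp add: fps_X_power_mult_nth assms)

lemma pade_cross_nth_low:
  fixes S A1 A2 B1 B2 :: "'a::comm_ring_1 fps"
  assumes E1: "\<And>i. i < m \<Longrightarrow> fps_nth (A1 - S * B1) i = 0"
    and E2: "\<And>i. i \<le> m \<Longrightarrow> fps_nth (A2 - S * B2) i = 0"
  shows "n < m \<Longrightarrow> fps_nth (A1 * B2 - A2 * B1) n = 0"
    and "fps_nth (A1 * B2 - A2 * B1) m = fps_nth (A1 - S * B1) m * fps_nth B2 0"
proof -
  define T1 where "T1 = fps_shift m (A1 - S * B1)"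
  define T2 where "T2 = fps_shift (Suc m) (A2 - S * B2)"
  have "A1 * B2 - A2 * B1 = (A1 - S * B1) * B2 - (A2 - S * B2) * B1"
    by (simp add: algebra_simps)
  also have "\<dots> = fps_X ^ m * (T1 * B2 - fps_X * T2 * B1)"
  proof -
    have e1: "A1 - S * B1 = fps_X ^ m * T1"
      unfolding T1_def by (rule fps_X_power_mult_shift[symmetric]) (rule E1)
    have e2: "A2 - S * B2 = fps_X ^ m * (fps_X * T2)"
      unfolding T2_def mult.assoc[symmetric] power_Suc2[symmetric]
      by (rule fps_X_power_mult_shift[symmetric]) (use E2 less_Suc_eq_le in blast)
    show ?thesis unfolding e1 e2 by (simp add: algebra_simps)
  qed
  finally have eq: "A1 * B2 - A2 * B1 = fps_X ^ m * (T1 * B2 - fps_X * T2 * B1)" .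
  show "n < m \<Longrightarrow> fps_nth (A1 * B2 - A2 * B1) n = 0"
    unfolding eq by (simp add: fps_X_power_mult_nth)
  show "fps_nth (A1 * B2 - A2 * B1) m = fps_nth (A1 - S * B1) m * fps_nth B2 0"
    unfolding eq by (simp add: fps_X_power_mult_nth T1_def mult.assoc)
qed

lemma coeff_mult_degree_le:
  assumes "degree p \<le> m" "degree q \<le> n"
  shows "coeff (p * q) (m + n) = coeff p m * coeff q n"
proof -
  have "coeff p i * coeff q (m + n - i) = 0" if "i \<noteq> m" for i
  proof (cases "i < m")
    case True
    then show ?thesis using assms(2) by (simp add: coeff_eq_0)
  next
    case False
    then show ?thesis using assms(1) that by (simp add: coeff_eq_0)
  qed
  then have "coeff (p * q) (m + n) = (\<Sum>i\<le>m + n. if i = m then coeff p m * coeff q n else 0)"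
    unfolding coeff_mult by (intro sum.cong) auto
  then show ?thesis by simp
qed

text \<open>The neighbouring index \<open>(r + 1 - g, 1 - g)\<close> is \<open>(r, 0)\<close> for \<open>g = 1\<close> and \<open>(r + 1, 1)\<close>
  for \<open>g = 0\<close>.\<close>

definition pade_cross :: "nat \<Rightarrow> nat \<Rightarrow> real poly" where
  "pade_cross r g = padeA r g * padeB (r + 1 - g) (1 - g) - padeA (r + 1 - g) (1 - g) * padeB r g"

lemma pade_cross_top:
  assumes "g \<in> {0, 1}" "1 \<le> r"
  shows "degree (pade_cross r g) \<le> 2 * r + 1 - g"
    and "coeff (pade_cross r g) (2 * r + 1 - g)
      = ((real r - real g + 1/4) gchoose (r + 1 - g)) * ((real r - 1/4) gchoose r)"
proof -
  have deg: "degree (padeA r' g' * padeB r'' g'') \<le> r' + (r'' - g'')" if "g' \<le> r'" for r' g' r'' g''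
    using degree_mult_le[of "padeA r' g'" "padeB r'' g''"] degree_padeA[OF that] degree_padeB[of r'' g'']
    by linarith
  have top: "coeff (padeA r' g' * padeB r'' g'') (r' + (r'' - g''))
      = coeff (padeA r' g') r' * coeff (padeB r'' g'') (r'' - g'')"
    if "g' \<le> r'" for r' g' r'' g''
    by (rule coeff_mult_degree_le[OF degree_padeA[OF that] degree_padeB])
  from assms(1) consider "g = 0" | "g = 1" by blast
  then have "degree (pade_cross r g) \<le> 2 * r + 1 - g \<and> coeff (pade_cross r g) (2 * r + 1 - g)
      = ((real r - real g + 1/4) gchoose (r + 1 - g)) * ((real r - 1/4) gchoose r)"
  proof cases
    case 1
    have low: "degree (padeA r 0 * padeB (r + 1) 1) < 2 * r + 1"
      using deg[of 0 r "r + 1" 1] by simp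
    then show ?thesis
      using deg[of 1 "r + 1" r 0] top[of 1 "r + 1" r 0] assms(2) coeff_eq_0[OF low]
        coeff_padeB_top[of 0 r]
      unfolding pade_cross_def 1
      by (auto intro: degree_diff_le simp: mult_2 coeff_padeA_top coeff_padeB_top)
  next
    case 2
    have low: "degree (padeA r 0 * padeB r 1) < 2 * r"
      using deg[of 0 r r 1] assms(2) by simp
    then show ?thesis
      using deg[of 1 r r 0] top[of 1 r r 0] assms(2) coeff_eq_0[OF low]
        coeff_padeB_top[of 0 r]
      unfolding pade_cross_def 2
      by (auto intro: degree_diff_le simp: mult_2 coeff_padeA_top coeff_padeB_top)
  qed
  then show "degree (pade_cross r g) \<le> 2 * r + 1 - g"
    and "coeff (pade_cross r g) (2 * r + 1 - g)
      = ((real r - real g + 1/4) gchoose (r + 1 - g)) * ((real r - 1/4) gchoose r)"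
    by blast+
qed

lemma pade_cross_low:
  assumes "g \<in> {0, 1}" "1 \<le> r"
  defines "e \<equiv> 2 * r + 1 - g"
  shows "n < e \<Longrightarrow> coeff (pade_cross r g) n = 0"
    and "coeff (pade_cross r g) e = fps_nth (pade_error r g) e * real (e choose r)"
proof -
  let ?S = "fps_one_minus_X_powr (1/4) :: real fps"
  let ?r = "r + 1 - g" and ?g = "1 - g"
  have cross: "fps_of_poly (pade_cross r g) = fps_of_poly (padeA r g) * fps_of_poly (padeB ?r ?g)
      - fps_of_poly (padeA ?r ?g) * fps_of_poly (padeB r g)"
    by (simp add: pade_cross_def fps_of_poly_diff fps_of_poly_mult)
  have E1: "fps_nth (fps_of_poly (padeA r g) - ?S * fps_of_poly (padeB r g)) i = 0" if "i < e" for i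
    using pade_error_vanishing[of g r i] assms(1,2) that unfolding pade_error_def e_def by auto
  have E2: "fps_nth (fps_of_poly (padeA ?r ?g) - ?S * fps_of_poly (padeB ?r ?g)) i = 0" if "i \<le> e" for i
    using pade_error_vanishing[of ?g ?r i] assms(1,2) that unfolding pade_error_def e_def by auto
  have "coeff (padeB ?r ?g) 0 = real (e choose (r + 1 - g))"
    using assms(1) by (auto simp: padeB_def coeff_pade_poly e_def)
  also have "e choose (r + 1 - g) = e choose r"
    using binomial_symmetric[of r e] assms(1) by (auto simp: e_def)
  finally have B0: "coeff (padeB ?r ?g) 0 = real (e choose r)" .
  show "n < e \<Longrightarrow> coeff (pade_cross r g) n = 0"
    using pade_cross_nth_low(1)[where m = e, OF E1 E2, of n] cross by (metis fps_of_poly_nth)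
  show "coeff (pade_cross r g) e = fps_nth (pade_error r g) e * real (e choose r)"
    using pade_cross_nth_low(2)[where m = e, OF E1 E2] cross B0 by (metis fps_of_poly_nth pade_error_def)
qed

lemma pade_error_leading:
  assumes "g \<in> {0, 1}" "1 \<le> r"
  shows "fps_nth (pade_error r g) (2 * r + 1 - g)
    = ((real r - real g + 1/4) gchoose (r + 1 - g)) * ((real r - 1/4) gchoose r)
      / real ((2 * r + 1 - g) choose r)"
proof -
  have "real ((2 * r + 1 - g) choose r) \<noteq> 0" using assms(1) by auto
  then show ?thesis
    using pade_cross_low(2)[OF assms] pade_cross_top(2)[OF assms] by (simp add: field_simps)
qed

lemma pade_error_leading_pos:
  assumes "g \<in> {0, 1}" "1 \<le> r"
  shows "0 < fps_nth (pade_error r g) (2 * r + 1 - g)"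
  unfolding pade_error_leading[OF assms] using assms(1)
  by (intro divide_pos_pos mult_pos_pos gbinomial_pos) auto

lemma pade_cross_eq_monom:
  assumes "g \<in> {0, 1}" "1 \<le> r"
  defines "e \<equiv> 2 * r + 1 - g"
  shows "pade_cross r g = monom (coeff (pade_cross r g) e) e" and "0 < coeff (pade_cross r g) e"
proof -
  show "pade_cross r g = monom (coeff (pade_cross r g) e) e"
  proof (rule poly_eqI)
    fix n
    show "coeff (pade_cross r g) n = coeff (monom (coeff (pade_cross r g) e) e) n"
      using pade_cross_low(1)[OF assms(1,2), of n] pade_cross_top(1)[OF assms(1,2)]
      by (cases "n < e") (auto simp: coeff_monom coeff_eq_0 e_def)
  qed
  have "0 < real (e choose r)" using assms(1) by (auto simp: e_def)
  then show "0 < coeff (pade_cross r g) e"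
    using pade_cross_low(2)[OF assms(1,2)] pade_error_leading_pos[OF assms(1,2)] by (simp add: e_def)
qed

lemma pade_cross_nonzero:
  assumes "g \<in> {0, 1}" "1 \<le> r" "z \<noteq> 0"
  shows "polyA r g z * polyB (r + 1 - g) (1 - g) z \<noteq> polyA (r + 1 - g) (1 - g) z * polyB r g z"
proof -
  let ?c = "coeff (pade_cross r g) (2 * r + 1 - g)"
  have "polyA r g z * polyB (r + 1 - g) (1 - g) z - polyA (r + 1 - g) (1 - g) z * polyB r g z
      = poly (map_poly of_real (pade_cross r g)) z"
    using assms(1,2)
    by (auto simp: pade_cross_def polyA_eq polyB_eq map_poly_of_real_mult map_poly_of_real_diff)
  also have "\<dots> = of_real ?c * z ^ (2 * r + 1 - g)"
    by (subst pade_cross_eq_monom(1)[OF assms(1,2)]) (simp add: map_poly_monom poly_monom)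
  finally show ?thesis using pade_cross_eq_monom(2)[OF assms(1,2)] assms(3) by auto
qed

section \<open>Bounds for the remainder and for A\<close>

lemma pade_tail_factor_le:
  assumes "g \<in> {0, 1}"
  shows "(real k + real r + 1 - real g) * (real k + real r + 3/4)
    \<le> (2 * real r + 1 - real g + real k + 1) * ((2 * real r + 1 - real g) / 2 + real k)"
proof -
  from assms consider "g = 0" | "g = 1" by blast
  then show ?thesis
  proof cases
    case 1
    have "(2 * real r + 1 + real k + 1) * ((2 * real r + 1) / 2 + real k)
      = (real k + real r + 1) * (real k + real r + 3/4)
        + ((real k + real r) * (real r + 3/4) + real r / 2 + 1/4)"
      by (simp add: field_simps)
    moreover have "0 \<le> (real k + real r) * (real r + 3/4)" by simp
    ultimately show ?thesis using 1 by simp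
  next
    case 2
    have "(real k + real r) * (real k + real r + 3/4) \<le> (real k + real r) * (2 * real r + real k + 1)"
      by (intro mult_left_mono) auto
    then show ?thesis using 2 by (simp add: algebra_simps)
  qed
qed

lemma pade_error_tail_rec:
  assumes "g \<in> {0, 1}" "1 \<le> r"
  defines "e \<equiv> 2 * r + 1 - g"
  shows "(real e + real k + 1) * (real k + 1) * fps_nth (pade_error r g) (e + Suc k)
    = (real k + real r + 1 - real g) * (real k + real r + 3/4) * fps_nth (pade_error r g) (e + k)"
proof -
  have "real e = 2 * real r + 1 - real g" using assms(1) by (auto simp: e_def)
  then have eqs: "real (e + k) + 1 = real e + real k + 1"
    "real (e + k) - (2 * real r - real g) = real k + 1"
    "real (e + k) - real r = real k + real r + 1 - real g"
    "real (e + k) - (real r - real g + 1/4) = real k + real r + 3/4"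
    by simp_all
  have "g \<le> r" using assms(1,2) by auto
  from pade_error_rec[OF this, of "e + k"] show ?thesis
    unfolding eqs by (simp add: mult.commute mult.left_commute)
qed

lemma gbinomial_neg_rec:
  "(of_nat k + 1) * (((- s) gchoose Suc k) * (- 1) ^ Suc k)
    = (s + of_nat k) * (((- s) gchoose k) * (- 1) ^ k :: 'a::field_char_0)"
proof -
  have "(of_nat k + 1) * (((- s) gchoose Suc k) * (- 1) ^ Suc k)
      = - ((- 1) ^ k * ((of_nat k + 1) * ((- s) gchoose Suc k)))"
    by (simp add: mult_ac)
  also have "\<dots> = (s + of_nat k) * (((- s) gchoose k) * (- 1) ^ k)"
    by (simp only: gbinomial_Suc_rec) (simp add: algebra_simps)
  finally show ?thesis .
qed

text \<open>The majorant is E_e times the coefficients of (1-x)^(-e/2).\<close>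

lemma pade_error_tail_bound:
  assumes "g \<in> {0, 1}" "1 \<le> r"
  defines "e \<equiv> 2 * r + 1 - g"
  shows "0 \<le> fps_nth (pade_error r g) (e + k)"
    and "fps_nth (pade_error r g) (e + k)
      \<le> fps_nth (pade_error r g) e * (((- (real e / 2)) gchoose k) * (- 1) ^ k)"
proof -
  define x where "x k = fps_nth (pade_error r g) (e + k)" for k
  define y where "y k = fps_nth (pade_error r g) e * (((- (real e / 2)) gchoose k) * (- 1) ^ k)" for k
  define Q where "Q k = (real e + real k + 1) * (real k + 1)" for k
  define P where "P k = (real k + real r + 1 - real g) * (real k + real r + 3/4)" for k
  define R where "R k = (real e + real k + 1) * (real e / 2 + real k)" for k
  have x: "Q k * x (Suc k) = P k * x k" for k
    using pade_error_tail_rec[OF assms(1,2), of k] unfolding x_def Q_def P_def e_def .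
  have y: "Q k * y (Suc k) = R k * y k" for k
    using gbinomial_neg_rec[of k "real e / 2"] unfolding y_def Q_def R_def
    by (metis (no_types, lifting) mult.assoc mult.left_commute)
  have Q: "0 < Q k" for k by (simp add: Q_def)
  have P: "0 \<le> P k" for k using assms(1) by (auto simp: P_def)
  have PR: "P k \<le> R k" for k
  proof -
    have "real e = 2 * real r + 1 - real g" using assms(1) by (auto simp: e_def)
    then show ?thesis unfolding P_def R_def by (simp only: pade_tail_factor_le[OF assms(1)])
  qed
  have x0: "0 \<le> x 0" "x 0 \<le> y 0"
    using pade_error_leading_pos[OF assms(1,2)] by (simp_all add: x_def y_def e_def)
  show "0 \<le> fps_nth (pade_error r g) (e + k)"
    using recurrence_nonneg[OF x Q P x0(1)] by (simp add: x_def)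
  show "fps_nth (pade_error r g) (e + k)
      \<le> fps_nth (pade_error r g) e * (((- (real e / 2)) gchoose k) * (- 1) ^ k)"
    using recurrence_le[OF x y Q P PR x0] by (simp add: x_def y_def)
qed

lemma pade_error_eval:
  fixes z :: complex
  assumes "g \<le> r"
  shows "1 \<le> fps_conv_radius (fps_of_real (pade_error r g) :: complex fps)"
    and "norm z < 1 \<Longrightarrow>
      eval_fps (fps_of_real (pade_error r g)) z = polyA r g z - (1 - z) powr (1/4) * polyB r g z"
proof -
  let ?S = "fps_one_minus_X_powr (1/4) :: complex fps"
  let ?A = "fps_of_poly (map_poly of_real (padeA r g)) :: complex fps"
  let ?B = "fps_of_poly (map_poly of_real (padeB r g)) :: complex fps"
  have E: "fps_of_real (pade_error r g) = ?A - ?S * ?B"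
    by (simp add: pade_error_def fps_of_real_diff fps_of_real_mult fps_of_real_fps_of_poly
        fps_of_real_one_minus_X_powr)
  have SB: "1 \<le> fps_conv_radius (?S * ?B)"
    using fps_conv_radius_mult[of ?S ?B] fps_conv_radius_one_minus_X_powr[of "1/4"] by simp
  then show "1 \<le> fps_conv_radius (fps_of_real (pade_error r g) :: complex fps)"
    unfolding E using fps_conv_radius_diff[of ?A "?S * ?B"] by simp
  assume z: "norm z < 1"
  have "norm z < fps_conv_radius ?S"
    using fps_conv_radius_one_minus_X_powr[of "1/4"] z by (simp add: order.strict_trans2[of _ 1])
  moreover have "norm z < fps_conv_radius (?S * ?B)"
    using SB z by (simp add: order.strict_trans2[of _ 1])
  ultimately have
    "eval_fps (fps_of_real (pade_error r g)) z = eval_fps ?A z - eval_fps ?S z * eval_fps ?B z"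
    unfolding E by (simp add: eval_fps_diff eval_fps_mult)
  then show "eval_fps (fps_of_real (pade_error r g)) z = polyA r g z - (1 - z) powr (1/4) * polyB r g z"
    using z assms by (simp add: polyA_eq polyB_eq eval_fps_one_minus_X_powr)
qed

lemma pade_remainder:
  assumes "g \<in> {0, 1}" "1 \<le> r"
  defines "e \<equiv> 2 * r + 1 - g"
  shows "\<exists>c :: nat \<Rightarrow> complex. \<forall>z. norm z < 1 \<longrightarrow>
    summable (\<lambda>n. c n * z ^ n) \<and>
    polyA r g z - (1 - z) powr (1/4) * polyB r g z = z ^ e * (\<Sum>n. c n * z ^ n) \<and>
    norm (\<Sum>n. c n * z ^ n) \<le> fps_nth (pade_error r g) e * (1 - norm z) powr (- (real e / 2))"
proof (intro exI allI impI conjI)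
  have gr: "g \<le> r" using assms(1,2) by auto
  define T where "T = fps_shift e (fps_of_real (pade_error r g) :: complex fps)"
  have ET: "fps_of_real (pade_error r g) = fps_X ^ e * T"
    unfolding T_def using pade_error_vanishing[OF gr]
    by (intro fps_X_power_mult_shift[symmetric]) (simp add: e_def)
  fix z :: complex
  assume z: "norm z < 1"
  have T: "norm z < fps_conv_radius T"
    using pade_error_eval(1)[OF gr] z unfolding T_def by (simp add: order.strict_trans2[of _ 1])
  show "summable (\<lambda>n. fps_nth T n * z ^ n)"
    by (rule summable_fps[OF T])
  have "polyA r g z - (1 - z) powr (1/4) * polyB r g z = z ^ e * eval_fps T z"
    using pade_error_eval(2)[OF gr z] T unfolding ET by (subst (asm) eval_fps_mult) auto
  then show "polyA r g z - (1 - z) powr (1/4) * polyB r g z = z ^ e * (\<Sum>n. fps_nth T n * z ^ n)"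
    by (simp add: eval_fps_def)
  define s where "s = real e / 2"
  define G where "G n = fps_nth (pade_error r g) e * (((- s) gchoose n) * (- 1) ^ n) * norm z ^ n" for n
  have "(\<lambda>n. ((- s) gchoose n) * (- norm z) ^ n) sums (1 + - norm z) powr (- s)"
    using z by (intro gen_binomial_real) simp
  then have "(\<lambda>n. ((- s) gchoose n) * (- 1) ^ n * norm z ^ n) sums (1 - norm z) powr (- s)"
    by (simp add: power_minus[of "norm z"] mult.assoc)
  then have G: "G sums (fps_nth (pade_error r g) e * (1 - norm z) powr (- s))"
    unfolding G_def mult.assoc by (rule sums_mult)
  have le: "norm (fps_nth T n * z ^ n) \<le> G n" for n
    using pade_error_tail_bound[OF assms(1,2), of n] unfolding T_def G_def s_def e_def
    by (simp add: norm_mult norm_power mult_right_mono add.commute)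
  have "norm (\<Sum>n. fps_nth T n * z ^ n) \<le> (\<Sum>n. norm (fps_nth T n * z ^ n))"
    by (rule summable_norm[OF norm_summable_fps[OF T]])
  also have "\<dots> \<le> (\<Sum>n. G n)"
    by (rule suminf_le[OF le norm_summable_fps[OF T] sums_summable[OF G]])
  finally show "norm (\<Sum>n. fps_nth T n * z ^ n)
      \<le> fps_nth (pade_error r g) e * (1 - norm z) powr (- (real e / 2))"
    using G by (simp add: sums_iff s_def)
qed

text \<open>No integer lies strictly between \<open>r - g + 1/4\<close> and \<open>r\<close>.\<close>

lemma reflected_factor_nonneg:
  assumes "g \<le> 1"
  shows "0 \<le> (real k - real r) * (real k - (real r - real g + 1/4))"
proof -
  consider "k < r" | "k = r" | "r < k" by linarith
  then show ?thesis
  proof cases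
    case 1
    then show ?thesis using assms by (intro mult_nonpos_nonpos) auto
  next
    case 3
    then show ?thesis using assms by (intro mult_nonneg_nonneg) auto
  qed simp
qed

lemma norm_poly_of_real_le_if_rec:
  fixes p :: "real poly" and w :: "'a::real_normed_field"
  assumes rec: "\<And>k. Q k * coeff p (Suc k) = P k * coeff p k"
    and Q: "\<And>k. 0 < Q k" and P: "\<And>k. 0 \<le> P k" and w: "norm w \<le> 1"
  shows "norm (poly (map_poly of_real p) w) \<le> \<bar>poly p 1\<bar>"
proof (cases "0 \<le> coeff p 0")
  case True
  then have "0 \<le> coeff p k" for k by (rule recurrence_nonneg[of Q "coeff p" P, OF rec Q P])
  then show ?thesis using norm_poly_of_real_le[OF _ w] by fastforce
next
  case False
  have "Q k * - coeff p (Suc k) = P k * - coeff p k" for k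
    using rec[of k] by simp
  from recurrence_nonneg[of Q "\<lambda>k. - coeff p k", OF this Q P] False
  have "0 \<le> coeff (- p) k" for k by simp
  then have "norm (poly (map_poly of_real (- p)) w) \<le> - poly p 1"
    using norm_poly_of_real_le[OF _ w] by fastforce
  moreover have "map_poly of_real (- p) = - (map_poly of_real p :: 'a poly)"
    by (rule poly_eqI) (simp add: coeff_map_poly)
  ultimately show ?thesis by simp
qed

lemma norm_polyA_le:
  assumes "g \<in> {0, 1}" "1 \<le> r" "norm (1 - z) \<le> 1"
  shows "norm (polyA r g z) \<le> real ((2 * r - g) choose r)"
proof -
  have gr: "g \<le> r" using assms(1,2) by auto
  define q where "q = padeA r g \<circ>\<^sub>p [:1, -1:]"
  have c: "- real r + - (real r - real g + 1/4) + 1 - - (2 * real r - real g) = 3/4" by simp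
  have "hypgeom_op_poly (- real r) (- (real r - real g + 1/4)) (3/4) q
      = hypgeom_op_poly (- real r) (- (real r - real g + 1/4)) (- (2 * real r - real g)) (padeA r g)
        \<circ>\<^sub>p [:1, -1:]"
    unfolding q_def c[symmetric] by (rule hypgeom_op_poly_reflect)
  also have "\<dots> = 0" by (simp only: hypgeom_op_padeA[OF gr] pcompose_0)
  finally have "hypgeom_op (- real r) (- (real r - real g + 1/4)) (3/4) (fps_of_poly q) = 0"
    by (simp add: fps_of_poly_hypgeom_op_poly[symmetric])
  then have rec: "(real k + 1) * (real k + 3/4) * coeff q (Suc k)
      = (real k - real r) * (real k - (real r - real g + 1/4)) * coeff q k" for k
    unfolding hypgeom_op_eq_0_iff add_uminus_conv_diff by simp
  have "poly q 1 = coeff (padeA r g) 0"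
    by (simp add: q_def poly_pcompose poly_0_coeff_0)
  also have "\<dots> = real ((2 * r - g) choose r)"
    using binomial_symmetric[of "r - g" "2 * r - g"] gr by (simp add: padeA_def coeff_pade_poly)
  finally have q1: "poly q 1 = real ((2 * r - g) choose r)" .
  have "norm (poly (map_poly of_real q) (1 - z)) \<le> \<bar>poly q 1\<bar>"
    using assms(1,3) by (intro norm_poly_of_real_le_if_rec[OF rec] reflected_factor_nonneg) auto
  then show ?thesis
    using q1 by (simp add: polyA_eq[OF gr] q_def poly_map_poly_of_real_pcompose map_poly_pCons)
qed

theorem lemma4p1:
  fixes r g :: nat
  assumes "r \<ge> 1" and "g \<in> {0, 1}"
  shows "(\<exists>c :: nat \<Rightarrow> complex. \<forall>z. norm z < 1 \<longrightarrow>
            summable (\<lambda>n. c n * z ^ n) \<and>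
            polyA r g z - (1 - z) powr (1/4) * polyB r g z
              = z ^ (2*r + 1 - g) * (\<Sum>n. c n * z ^ n) \<and>
            norm (\<Sum>n. c n * z ^ n)
              \<le> ((real r - real g + 1/4) gchoose (r + 1 - g)) * ((real r - 1/4) gchoose r)
                 / real ((2*r + 1 - g) choose r)
                 * (1 - norm z) powr (- (real (2*r + 1 - g) / 2)))
       \<and> (\<forall>z. norm (1 - z) \<le> 1 \<longrightarrow> norm (polyA r g z) \<le> real ((2*r - g) choose r))
       \<and> (\<forall>z h. z \<noteq> 0 \<longrightarrow> h \<in> {0, 1::nat} \<longrightarrow>
            polyA r 0 z * polyB (r + h) 1 z \<noteq> polyA (r + h) 1 z * polyB r 0 z)"
proof -
  have rg: "g \<in> {0, 1}" "1 \<le> r" using assms by auto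
  have "polyA r 0 z * polyB (r + h) 1 z \<noteq> polyA (r + h) 1 z * polyB r 0 z"
    if "z \<noteq> 0" "h \<in> {0, 1}" for z h
    using that pade_cross_nonzero[of 1 r z] pade_cross_nonzero[of 0 r z] assms(1) by auto
  then show ?thesis
    using pade_remainder[OF rg] norm_polyA_le[OF rg] unfolding pade_error_leading[OF rg] by blast
qed

end
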